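(* $\frac{11n}{9}+o(n)\le\mathrm{sat}_\circlearrowright(n,M_2)\le 3n+o(n)$.
   Context: $\Omega_n=\{v_0,\dots,v_{n-1}\}$ with cyclic order $v_0<\dots<v_{n-1}<v_0$ (indices mod $n$). A $3$-cgh on $\Omega_n$ is a family of $3$-subsets of $\Omega_n$. For a $3$-cgh $F$, $H$ contains a copy of $F$ if there is an injection of the vertex set of $F$ into $\Omega_n$ preserving the cyclic order and mapping every edge of $F$ to an edge of $H$. $H$ is $F$-saturated if it contains no copy of $F$ but $H\cup\{e\}$ does for every $e\in\binom{\Omega_n}{3}\setminus H$; $\mathrm{sat}_\circlearrowright(n,F)$ is the minimum number of edges of an $F$-saturated $3$-cgh on $\Omega_n$. $M_2$ is the $3$-cgh on $\Omega_6$ with edges $\{v_0,v_1,v_3\}$ and $\{v_2,v_4,v_5\}$. *)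

theory Defs
  imports "HOL-Library.Landau_Symbols"
begin

text \<open>Vertices of Omega_n are 0..<n (v_i is i), cyclic order 0 < 1 < ... < n-1 < 0.
  A 3-cgh on Omega_n is a family of 3-subsets of {0..<n}.
  A pattern F on k vertices has vertex set {0..<k}.\<close>

definition triples :: "nat \<Rightarrow> nat set set" where
  "triples n = {e. e \<subseteq> {0..<n} \<and> card e = 3}"

definition cgh :: "nat \<Rightarrow> nat set set \<Rightarrow> bool" where
  "cgh n H \<longleftrightarrow> H \<subseteq> triples n"

definition cyc_order_pres :: "nat \<Rightarrow> nat \<Rightarrow> (nat \<Rightarrow> nat) \<Rightarrow> bool" where
  "cyc_order_pres n k \<phi> \<longleftrightarrow> (\<forall>i<k. \<phi> i < n) \<and>
     (\<exists>r<n. strict_mono_on {0..<k} (\<lambda>i. (\<phi> i + (n - r)) mod n))"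

definition contains_copy :: "nat \<Rightarrow> nat set set \<Rightarrow> nat \<Rightarrow> nat set set \<Rightarrow> bool" where
  "contains_copy n H k F \<longleftrightarrow>
     (\<exists>\<phi>. cyc_order_pres n k \<phi> \<and> (\<forall>e\<in>F. \<phi> ` e \<in> H))"

definition saturated :: "nat \<Rightarrow> nat \<Rightarrow> nat set set \<Rightarrow> nat set set \<Rightarrow> bool" where
  "saturated n k F H \<longleftrightarrow> cgh n H \<and> \<not> contains_copy n H k F \<and>
     (\<forall>e\<in>triples n - H. contains_copy n (insert e H) k F)"

definition sat_cyc :: "nat \<Rightarrow> nat \<Rightarrow> nat set set \<Rightarrow> nat" where
  "sat_cyc n k F = Min (card ` {H. saturated n k F H})"

definition M2 :: "nat set set" where
  "M2 = {{0,1,3},{2,4,5}}"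

end

theory Submission
  imports Defs
begin

text \<open>Rotating \<open>\<Omega>\<^sub>n\<close> so that a copy of \<open>M\<^sub>2\<close> starts at its first vertex, a copy is a sequence
  \<open>y\<^sub>0 < \<dots> < y\<^sub>5\<close> with edges \<open>{y\<^sub>0, y\<^sub>1, y\<^sub>3}\<close> and \<open>{y\<^sub>2, y\<^sub>4, y\<^sub>5}\<close>.
  For the upper bound, the \<open>2n\<close> triples \<open>{x, x+1, x+2}\<close> and \<open>{x, x+1, x+3}\<close> (mod \<open>n\<close>) form an
  \<open>M\<^sub>2\<close>-saturated graph for \<open>n \<ge> 7\<close>.
  For the lower bound, an \<open>M\<^sub>2\<close>-saturated graph \<open>H\<close> contains every consecutive triple
  \<open>{x, x+1, x+2}\<close>, since adding one cannot create a copy. If \<open>{x, x+1, x+3}\<close> is missing from \<open>H\<close>,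
  the copy created by adding it uses it as the edge \<open>{y\<^sub>0, y\<^sub>1, y\<^sub>3}\<close>, so \<open>x+2 = y\<^sub>2\<close> lies on a
  non-consecutive edge of \<open>H\<close>. Each non-consecutive edge serves at most four values of \<open>x\<close>, hence
  \<open>|H| \<ge> n + n/4 \<ge> 11n/9\<close>. The finitely many small \<open>n\<close> are absorbed by the \<open>o(n)\<close> terms.\<close>

section \<open>Copies of \<open>M\<^sub>2\<close> up to rotation\<close>

definition rot :: "nat \<Rightarrow> nat \<Rightarrow> nat \<Rightarrow> nat" where
  "rot n r y = (y + r) mod n"

lemma rot_inverse:
  assumes "r < n" "y < n"
  shows "(rot n r y + (n - r)) mod n = y"
proof -
  have "(rot n r y + (n - r)) mod n = (y + r + (n - r)) mod n"
    unfolding rot_def by (simp add: mod_add_left_eq)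
  also have "y + r + (n - r) = y + n" using assms(1) by simp
  finally show ?thesis using assms(2) by simp
qed

lemma sorted_triple_eq:
  fixes a b c p q s :: nat
  assumes "a < b" "b < c" "p < q" "q < s" "{a, b, c} = {p, q, s}"
  shows "a = p \<and> b = q \<and> c = s"
proof -
  have "a \<in> {p, q, s}" "b \<in> {p, q, s}" "c \<in> {p, q, s}" "p \<in> {a, b, c}" "q \<in> {a, b, c}" "s \<in> {a, b, c}"
    using assms(5) by blast+
  then show ?thesis using assms(1-4) by auto
qed

lemma card_3_sorted:
  fixes e :: "nat set"
  assumes "card e = 3"
  obtains a b c where "a < b" "b < c" "e = {a, b, c}"
proof -
  have "finite e" using assms by (intro card_ge_0_finite) simp
  then obtain xs where xs: "sorted_wrt (<) xs" "set xs = e" "length xs = 3"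
    using assms by (metis sorted_list_of_set.finite_set_strict_sorted)
  then obtain a b c where "xs = [a, b, c]"
    by (metis length_0_conv length_Suc_conv numeral_3_eq_3)
  then show ?thesis using xs that by auto
qed

lemma contains_M2_iff:
  "contains_copy n H 6 M2 \<longleftrightarrow> (\<exists>r<n. \<exists>y0 y1 y2 y3 y4 y5.
     y0 < y1 \<and> y1 < y2 \<and> y2 < y3 \<and> y3 < y4 \<and> y4 < y5 \<and> y5 < n \<and>
     {rot n r y0, rot n r y1, rot n r y3} \<in> H \<and> {rot n r y2, rot n r y4, rot n r y5} \<in> H)"
  (is "_ \<longleftrightarrow> ?rhs")
proof
  assume "contains_copy n H 6 M2"
  then obtain \<phi> r where \<phi>: "\<forall>i<6. \<phi> i < n" and r: "r < n"
    and mono: "strict_mono_on {0..<6} (\<lambda>i. (\<phi> i + (n - r)) mod n)" and edges: "\<forall>e\<in>M2. \<phi> ` e \<in> H"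
    unfolding contains_copy_def cyc_order_pres_def by blast
  define y where "y i = (\<phi> i + (n - r)) mod n" for i
  have \<phi>_eq: "\<phi> i = rot n r (y i)" if "i < 6" for i
  proof -
    have "rot n r (y i) = (\<phi> i + n) mod n"
      unfolding rot_def y_def using r by (simp add: mod_add_left_eq)
    then show ?thesis using \<phi> that by simp
  qed
  have "y i < y j" if "i < j" "j < 6" for i j
    using mono that unfolding strict_mono_on_def y_def by auto
  moreover have "y 5 < n" unfolding y_def using r by simp
  moreover have "{\<phi> 0, \<phi> 1, \<phi> 3} \<in> H" "{\<phi> 2, \<phi> 4, \<phi> 5} \<in> H"
    using edges unfolding M2_def by auto
  ultimately have "y 0 < y 1 \<and> y 1 < y 2 \<and> y 2 < y 3 \<and> y 3 < y 4 \<and> y 4 < y 5 \<and> y 5 < n \<and>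
      {rot n r (y 0), rot n r (y 1), rot n r (y 3)} \<in> H \<and> {rot n r (y 2), rot n r (y 4), rot n r (y 5)} \<in> H"
    using \<phi>_eq[of 0] \<phi>_eq[of 1] \<phi>_eq[of 2] \<phi>_eq[of 3] \<phi>_eq[of 4] \<phi>_eq[of 5] by simp
  then show ?rhs using r by blast
next
  assume ?rhs
  then obtain r y0 y1 y2 y3 y4 y5 where r: "r < n"
    and ys: "y0 < y1" "y1 < y2" "y2 < y3" "y3 < y4" "y4 < y5" "y5 < n"
    and edges: "{rot n r y0, rot n r y1, rot n r y3} \<in> H" "{rot n r y2, rot n r y4, rot n r y5} \<in> H"
    by blast
  define y where "y = (!) [y0, y1, y2, y3, y4, y5]"
  have y_less: "y i < n" if "i < 6" for i
    using that ys by (auto simp: y_def less_Suc_eq numeral_eq_Suc)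
  have "y i < y j" if "i < j" "j < 6" for i j
    using that ys by (auto simp: y_def less_Suc_eq numeral_eq_Suc)
  then have "strict_mono_on {0..<6} (\<lambda>i. (rot n r (y i) + (n - r)) mod n)"
    unfolding strict_mono_on_def by (auto simp: rot_inverse r y_less)
  moreover have "\<forall>e\<in>M2. (\<lambda>i. rot n r (y i)) ` e \<in> H"
    using edges unfolding M2_def y_def by auto
  moreover have "\<forall>i<6. rot n r (y i) < n" using r by (simp add: rot_def)
  ultimately show "contains_copy n H 6 M2"
    unfolding contains_copy_def cyc_order_pres_def using r by (intro exI[of _ "\<lambda>i. rot n r (y i)"]) blast
qed

lemma contains_M2_cyclic_shift:
  assumes ps: "sorted_wrt (<) ps" "length ps = 6" "ps ! 5 < n" and i: "i < 6"
    and edges: "{ps ! i, ps ! ((i + 1) mod 6), ps ! ((i + 3) mod 6)} \<in> H"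
      "{ps ! ((i + 2) mod 6), ps ! ((i + 4) mod 6), ps ! ((i + 5) mod 6)} \<in> H"
  shows "contains_copy n H 6 M2"
proof -
  define p where "p = (!) ps"
  have p_mono: "p j < p k" if "j < k" "k < 6" for j k
    using ps that unfolding p_def sorted_wrt_iff_nth_less by simp
  have p_less: "p j < n" if "j < 6" for j
    using p_mono[of j 5] that ps(3) unfolding p_def by (cases "j = 5") auto
  define y where "y j = (p ((i + j) mod 6) + (n - p i)) mod n" for j
  have y_eq: "y j = (if i + j < 6 then p (i + j) - p i else p (i + j - 6) + n - p i)" if "j < 6" for j
  proof (cases "i + j < 6")
    case True
    have "p i \<le> p (i + j)" using p_mono[of i "i + j"] True by (cases "j = 0") auto
    then show ?thesis using True p_less[of "i + j"] by (simp add: y_def mod_if)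
  next
    case False
    have "p (i + j - 6) < p i" using p_mono[of "i + j - 6" i] False that i by simp
    then show ?thesis using False that i p_less[of i] by (simp add: y_def mod_if)
  qed
  have y_mono: "y j < y k" if "j < k" "k < 6" for j k
  proof -
    consider "i + k < 6" | "i + j < 6" "6 \<le> i + k" | "6 \<le> i + j" using that by linarith
    then show ?thesis
    proof cases
      case 1
      then show ?thesis using p_mono[of "i + j" "i + k"] p_mono[of i "i + j"] that
        by (cases "j = 0") (auto simp: y_eq)
    next
      case 2
      then show ?thesis using p_less[of "i + j"] p_less[of i] that i by (simp add: y_eq)
    next
      case 3
      then have "p (i + j - 6) < p (i + k - 6)" using p_mono that i by simp
      then show ?thesis using 3 p_less[of i] that i by (simp add: y_eq)
    qed
  qed
  have rot_y: "rot n (p i) (y j) = p ((i + j) mod 6)" for j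
  proof -
    have "rot n (p i) (y j) = (p ((i + j) mod 6) + (n - p i) + p i) mod n"
      unfolding rot_def y_def by (simp add: mod_add_left_eq)
    also have "\<dots> = (p ((i + j) mod 6) + n) mod n" using p_less[of i] i by simp
    finally show ?thesis using p_less[of "(i + j) mod 6"] by simp
  qed
  have "{rot n (p i) (y 0), rot n (p i) (y 1), rot n (p i) (y 3)} \<in> H"
    "{rot n (p i) (y 2), rot n (p i) (y 4), rot n (p i) (y 5)} \<in> H"
    using edges i unfolding rot_y by (simp_all add: p_def)
  moreover have "y 5 < n" using p_less[of i] i unfolding y_def by simp
  ultimately have "y 0 < y 1 \<and> y 1 < y 2 \<and> y 2 < y 3 \<and> y 3 < y 4 \<and> y 4 < y 5 \<and> y 5 < n \<and>
      {rot n (p i) (y 0), rot n (p i) (y 1), rot n (p i) (y 3)} \<in> H \<and>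
      {rot n (p i) (y 2), rot n (p i) (y 4), rot n (p i) (y 5)} \<in> H"
    using y_mono[of 0 1] y_mono[of 1 2] y_mono[of 2 3] y_mono[of 3 4] y_mono[of 4 5] by simp
  then show ?thesis unfolding contains_M2_iff using p_less i by blast
qed

section \<open>Cyclic triples\<close>

definition cyc_triple :: "nat \<Rightarrow> nat \<Rightarrow> nat \<Rightarrow> nat set" where
  "cyc_triple n k x = {x, (x + 1) mod n, (x + k) mod n}"

definition cyc_triples :: "nat \<Rightarrow> nat \<Rightarrow> nat set set" where
  "cyc_triples n k = cyc_triple n k ` {0..<n}"

lemma rot_image_cyc_triple: "x < n \<Longrightarrow> rot n s ` cyc_triple n k x = cyc_triple n k (rot n s x)"
proof -
  have shift: "((x + j) mod n + s) mod n = ((x + s) mod n + j) mod n" for j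
    by (simp add: mod_simps ac_simps)
  assume "x < n"
  then show ?thesis
    unfolding cyc_triple_def rot_def using shift[of 1] shift[of k] by simp
qed

lemma cyc_triples_unrotate:
  assumes "r < n" "a < n" "b < n" "c < n" "{rot n r a, rot n r b, rot n r c} \<in> cyc_triples n k"
  shows "{a, b, c} \<in> cyc_triples n k"
proof -
  obtain x where x: "x < n" "{rot n r a, rot n r b, rot n r c} = cyc_triple n k x"
    using assms(5) unfolding cyc_triples_def by auto
  have "rot n (n - r) (rot n r y) = y" if "y < n" for y
    using rot_inverse[OF assms(1) that] by (simp add: rot_def)
  then have "{a, b, c} = rot n (n - r) ` cyc_triple n k x"
    using assms(2-4) by (simp flip: x(2))
  also have "\<dots> = cyc_triple n k (rot n (n - r) x)"
    using x(1) by (rule rot_image_cyc_triple)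
  finally show ?thesis
    unfolding cyc_triples_def using x(1) by (simp add: rot_def)
qed

lemma cyc_triple_in_triples:
  assumes "1 < k" "k < n" "x < n"
  shows "cyc_triple n k x \<in> triples n"
proof -
  have "x \<noteq> (x + 1) mod n" "x \<noteq> (x + k) mod n" "(x + 1) mod n \<noteq> (x + k) mod n"
    using assms by (auto simp: mod_if)
  then show ?thesis
    unfolding triples_def cyc_triple_def using assms by auto
qed

lemma inj_on_cyc_triple:
  assumes "1 < k" "2 * k < n"
  shows "inj_on (cyc_triple n k) {0..<n}"
proof
  fix x u assume xu: "x \<in> {0..<n}" "u \<in> {0..<n}" and eq: "cyc_triple n k x = cyc_triple n k u"
  show "x = u"
  proof (rule ccontr)
    assume "x \<noteq> u"
    moreover have "x \<in> cyc_triple n k u" "u \<in> cyc_triple n k x"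
      using eq unfolding cyc_triple_def by auto
    ultimately have "x = (u + 1) mod n \<or> x = (u + k) mod n" "u = (x + 1) mod n \<or> u = (x + k) mod n"
      unfolding cyc_triple_def by auto
    then show False using xu assms by (auto simp: mod_if split: if_splits)
  qed
qed

lemma cyc_triples_2_iff:
  assumes "a < b" "b < c" "c < n"
  shows "{a, b, c} \<in> cyc_triples n 2 \<longleftrightarrow>
    (b = a + 1 \<and> c = a + 2) \<or> (a = 0 \<and> b = 1 \<and> c = n - 1) \<or> (a = 0 \<and> b = n - 2 \<and> c = n - 1)"
proof
  assume "{a, b, c} \<in> cyc_triples n 2"
  then obtain x where x: "x < n" "{a, b, c} = {x, (x + 1) mod n, (x + 2) mod n}"
    unfolding cyc_triples_def cyc_triple_def by auto
  consider "x + 2 < n" | "x = n - 2" | "x = n - 1" using x(1) by linarith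
  then show "(b = a + 1 \<and> c = a + 2) \<or> (a = 0 \<and> b = 1 \<and> c = n - 1) \<or> (a = 0 \<and> b = n - 2 \<and> c = n - 1)"
  proof cases
    case 1
    then have "{a, b, c} = {x, x + 1, x + 2}" using x by simp
    then show ?thesis using sorted_triple_eq[of a b c x "x + 1" "x + 2"] assms by simp
  next
    case 2
    then have "{a, b, c} = {0, n - 2, n - 1}" using x assms by (auto simp: mod_if)
    then show ?thesis using sorted_triple_eq[of a b c 0 "n - 2" "n - 1"] assms by simp
  next
    case 3
    then have "{a, b, c} = {0, 1, n - 1}" using x assms by (auto simp: mod_if)
    then show ?thesis using sorted_triple_eq[of a b c 0 1 "n - 1"] assms by simp
  qed
next
  assume "(b = a + 1 \<and> c = a + 2) \<or> (a = 0 \<and> b = 1 \<and> c = n - 1) \<or> (a = 0 \<and> b = n - 2 \<and> c = n - 1)"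
  then have "\<exists>x<n. {a, b, c} = cyc_triple n 2 x"
  proof (elim disjE)
    assume "b = a + 1 \<and> c = a + 2"
    then show ?thesis using assms unfolding cyc_triple_def by (intro exI[of _ a]) auto
  next
    assume "a = 0 \<and> b = 1 \<and> c = n - 1"
    then show ?thesis using assms unfolding cyc_triple_def by (intro exI[of _ "n - 1"]) (auto simp: mod_if)
  next
    assume "a = 0 \<and> b = n - 2 \<and> c = n - 1"
    then show ?thesis using assms unfolding cyc_triple_def by (intro exI[of _ "n - 2"]) (auto simp: mod_if)
  qed
  then show "{a, b, c} \<in> cyc_triples n 2" unfolding cyc_triples_def by auto
qed

lemma cyc_triples_3_iff:
  assumes "a < b" "b < c" "c < n" "5 \<le> n"
  shows "{a, b, c} \<in> cyc_triples n 3 \<longleftrightarrow>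
    (b = a + 1 \<and> c = a + 3) \<or> (a = 0 \<and> b = 2 \<and> c = n - 1) \<or>
    (a = 1 \<and> b = n - 2 \<and> c = n - 1) \<or> (a = 0 \<and> b = n - 3 \<and> c = n - 2)"
proof
  assume "{a, b, c} \<in> cyc_triples n 3"
  then obtain x where x: "x < n" "{a, b, c} = {x, (x + 1) mod n, (x + 3) mod n}"
    unfolding cyc_triples_def cyc_triple_def by auto
  consider "x + 3 < n" | "x = n - 3" | "x = n - 2" | "x = n - 1" using x(1) by linarith
  then show "(b = a + 1 \<and> c = a + 3) \<or> (a = 0 \<and> b = 2 \<and> c = n - 1) \<or>
    (a = 1 \<and> b = n - 2 \<and> c = n - 1) \<or> (a = 0 \<and> b = n - 3 \<and> c = n - 2)"
  proof cases
    case 1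
    then have "{a, b, c} = {x, x + 1, x + 3}" using x by simp
    then show ?thesis using sorted_triple_eq[of a b c x "x + 1" "x + 3"] assms by simp
  next
    case 2
    then have "{a, b, c} = {0, n - 3, n - 2}" using x assms by (auto simp: mod_if)
    then show ?thesis using sorted_triple_eq[of a b c 0 "n - 3" "n - 2"] assms by simp
  next
    case 3
    then have "{a, b, c} = {1, n - 2, n - 1}" using x assms by (auto simp: mod_if)
    then show ?thesis using sorted_triple_eq[of a b c 1 "n - 2" "n - 1"] assms by simp
  next
    case 4
    then have "{a, b, c} = {0, 2, n - 1}" using x assms by (auto simp: mod_if)
    then show ?thesis using sorted_triple_eq[of a b c 0 2 "n - 1"] assms by simp
  qed
next
  assume "(b = a + 1 \<and> c = a + 3) \<or> (a = 0 \<and> b = 2 \<and> c = n - 1) \<or>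
    (a = 1 \<and> b = n - 2 \<and> c = n - 1) \<or> (a = 0 \<and> b = n - 3 \<and> c = n - 2)"
  then have "\<exists>x<n. {a, b, c} = cyc_triple n 3 x"
  proof (elim disjE)
    assume "b = a + 1 \<and> c = a + 3"
    then show ?thesis using assms unfolding cyc_triple_def by (intro exI[of _ a]) auto
  next
    assume "a = 0 \<and> b = 2 \<and> c = n - 1"
    then show ?thesis using assms unfolding cyc_triple_def by (intro exI[of _ "n - 1"]) (auto simp: mod_if)
  next
    assume "a = 1 \<and> b = n - 2 \<and> c = n - 1"
    then show ?thesis using assms unfolding cyc_triple_def by (intro exI[of _ "n - 2"]) (auto simp: mod_if)
  next
    assume "a = 0 \<and> b = n - 3 \<and> c = n - 2"
    then show ?thesis using assms unfolding cyc_triple_def by (intro exI[of _ "n - 3"]) (auto simp: mod_if)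
  qed
  then show "{a, b, c} \<in> cyc_triples n 3" unfolding cyc_triples_def by auto
qed

lemma cyc_triple_3_notin_cyc_triples_2:
  assumes "7 \<le> n" "x < n"
  shows "cyc_triple n 3 x \<notin> cyc_triples n 2"
proof
  assume in2: "cyc_triple n 3 x \<in> cyc_triples n 2"
  have "card (cyc_triple n 3 x) = 3" "cyc_triple n 3 x \<subseteq> {0..<n}"
    using cyc_triple_in_triples[of 3 n x] assms unfolding triples_def by auto
  then obtain a b c where abc: "a < b" "b < c" "c < n" "cyc_triple n 3 x = {a, b, c}"
    by (metis card_3_sorted atLeastLessThan_iff insert_subset)
  have "{a, b, c} \<in> cyc_triples n 3" using abc(4) assms(2) unfolding cyc_triples_def by auto
  then have "(b = a + 1 \<and> c = a + 3) \<or> (a = 0 \<and> b = 2 \<and> c = n - 1) \<or>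
    (a = 1 \<and> b = n - 2 \<and> c = n - 1) \<or> (a = 0 \<and> b = n - 3 \<and> c = n - 2)"
    using cyc_triples_3_iff[OF abc(1-3)] assms(1) by simp
  moreover have "(b = a + 1 \<and> c = a + 2) \<or> (a = 0 \<and> b = 1 \<and> c = n - 1) \<or> (a = 0 \<and> b = n - 2 \<and> c = n - 1)"
    using cyc_triples_2_iff[OF abc(1-3)] in2 abc(4) by simp
  ultimately show False using assms(1) by (elim disjE conjE) linarith+
qed

section \<open>An \<open>M\<^sub>2\<close>-saturated graph with at most \<open>2n\<close> edges\<close>

definition sat_graph :: "nat \<Rightarrow> nat set set" where
  "sat_graph n = cyc_triples n 2 \<union> cyc_triples n 3"

lemma sat_graph_mem_iff:
  assumes "a < b" "b < c" "c < n" "7 \<le> n"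
  shows "{a, b, c} \<in> sat_graph n \<longleftrightarrow>
    (b = a + 1 \<and> c = a + 2) \<or> (a = 0 \<and> b = 1 \<and> c = n - 1) \<or> (a = 0 \<and> b = n - 2 \<and> c = n - 1) \<or>
    (b = a + 1 \<and> c = a + 3) \<or> (a = 0 \<and> b = 2 \<and> c = n - 1) \<or>
    (a = 1 \<and> b = n - 2 \<and> c = n - 1) \<or> (a = 0 \<and> b = n - 3 \<and> c = n - 2)"
  unfolding sat_graph_def using cyc_triples_2_iff[OF assms(1-3)] cyc_triples_3_iff[OF assms(1-3)] assms(4)
  by auto

lemma sat_graph_M2_free:
  assumes "7 \<le> n"
  shows "\<not> contains_copy n (sat_graph n) 6 M2"
proof
  assume "contains_copy n (sat_graph n) 6 M2"
  then obtain r y0 y1 y2 y3 y4 y5 where r: "r < n"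
    and ys: "y0 < y1" "y1 < y2" "y2 < y3" "y3 < y4" "y4 < y5" "y5 < n"
    and edges: "{rot n r y0, rot n r y1, rot n r y3} \<in> sat_graph n"
      "{rot n r y2, rot n r y4, rot n r y5} \<in> sat_graph n"
    unfolding contains_M2_iff by blast
  have "{y0, y1, y3} \<in> sat_graph n" "{y2, y4, y5} \<in> sat_graph n"
    using edges cyc_triples_unrotate[OF r] ys unfolding sat_graph_def by auto
  then have "y1 = y0 + 1 \<and> y3 = y0 + 3"
    and "(y4 = y2 + 1 \<and> y5 = y2 + 2) \<or> (y2 = 0 \<and> y4 = 1 \<and> y5 = n - 1) \<or>
      (y2 = 0 \<and> y4 = n - 2 \<and> y5 = n - 1) \<or> (y4 = y2 + 1 \<and> y5 = y2 + 3) \<or>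
      (y2 = 0 \<and> y4 = 2 \<and> y5 = n - 1) \<or> (y2 = 1 \<and> y4 = n - 2 \<and> y5 = n - 1) \<or>
      (y2 = 0 \<and> y4 = n - 3 \<and> y5 = n - 2)"
    using sat_graph_mem_iff[of y0 y1 y3 n] sat_graph_mem_iff[of y2 y4 y5 n] ys assms
    by (auto; linarith)+
  then show False using ys by (elim disjE conjE) linarith+
qed

lemma sat_graph_non_edge_cases:
  assumes "7 \<le> n" "a < b" "b < c" "c < n" "{a, b, c} \<notin> sat_graph n"
  obtains "a + 2 < b" "b + 1 < c"
    | "b + 2 < c" "c + 1 < n"
    | "b + 2 < c" "c = n - 1" "1 \<le> a"
    | "2 \<le> a" "a + 1 < b"
    | "a = 1" "2 < b" "c < n - 1"
    | "a = 0" "1 < b" "c < n - 2"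
proof -
  have not_edge: "\<not> ((b = a + 1 \<and> c = a + 2) \<or> (a = 0 \<and> b = 1 \<and> c = n - 1) \<or>
    (a = 0 \<and> b = n - 2 \<and> c = n - 1) \<or> (b = a + 1 \<and> c = a + 3) \<or> (a = 0 \<and> b = 2 \<and> c = n - 1) \<or>
    (a = 1 \<and> b = n - 2 \<and> c = n - 1) \<or> (a = 0 \<and> b = n - 3 \<and> c = n - 2))"
    using sat_graph_mem_iff[OF assms(2-4,1)] assms(5) by simp
  show ?thesis
  proof (cases "b = a + 1")
    case True
    then have "a + 4 \<le> c" using not_edge assms(3) by auto
    then show ?thesis using that not_edge True assms(4) by (cases "c + 1 < n") auto
  next
    case False
    then have gap: "a + 2 \<le> b" using assms(2) by linarith
    consider "2 \<le> a" | "a = 1" | "a = 0" by linarith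
    then show ?thesis
    proof cases
      case 1
      then show ?thesis using that gap by simp
    next
      case 2
      show ?thesis
      proof (cases "c < n - 1")
        case True
        then show ?thesis using that(5) 2 gap by simp
      next
        case False
        then have "c = n - 1" using assms(4) by linarith
        consider "b + 2 < c" | "c = b + 1" | "c = b + 2" using assms(3) by linarith
        then show ?thesis
        proof cases
          case 1
          then show ?thesis using that(3) 2 \<open>c = n - 1\<close> by simp
        next
          case 2
          then show ?thesis using not_edge \<open>a = 1\<close> \<open>c = n - 1\<close> by auto
        next
          case 3
          then show ?thesis using that(1) \<open>a = 1\<close> \<open>c = n - 1\<close> assms(1) by simp
        qed
      qed
    next
      case 3
      then show ?thesis using that not_edge gap assms(1,3,4)
        by (cases "c < n - 2"; cases "b + 1 < c"; cases "b = 2") auto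
    qed
  qed
qed

lemma sat_graph_add_edge:
  assumes "7 \<le> n" "a < b" "b < c" "c < n" "{a, b, c} \<notin> sat_graph n"
  shows "contains_copy n (insert {a, b, c} (sat_graph n)) 6 M2"
proof -
  let ?H = "insert {a, b, c} (sat_graph n)"
  have step3: "{p, q, s} \<in> ?H" if "q = p + 1" "s = p + 3" "s < n" for p q s
    using sat_graph_mem_iff[of p q s n] that assms(1) by simp
  have wrap: "{n - 3, n - 2, 0} \<in> ?H" "{n - 1, 0, 2} \<in> ?H" "{n - 2, n - 1, 1} \<in> ?H"
    using sat_graph_mem_iff[of 0 "n - 3" "n - 2" n] sat_graph_mem_iff[of 0 2 "n - 1" n]
      sat_graph_mem_iff[of 1 "n - 2" "n - 1" n] assms(1) by (simp_all add: insert_commute)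
  txt \<open>In each case the new triple and an edge \<open>{p, p+1, p+3}\<close> (mod \<open>n\<close>) of the graph form a
    copy of \<open>M\<^sub>2\<close> on six cyclically ordered points.\<close>
  from assms show ?thesis
  proof (cases rule: sat_graph_non_edge_cases)
    case 1
    have "{b - 2, b - 1, b + 1} \<in> ?H" using 1 assms(3,4) by (intro step3) linarith+
    moreover have "{b, c, a} \<in> ?H" by (simp add: insert_commute)
    ultimately show ?thesis using 1 assms(4)
      by (intro contains_M2_cyclic_shift[of "[a, b - 2, b - 1, b, b + 1, c]" n 1]) (simp_all, linarith?)
  next
    case 2
    have "{c - 2, c - 1, c + 1} \<in> ?H" using 2 by (intro step3) linarith+
    moreover have "{c, a, b} \<in> ?H" by (simp add: insert_commute)
    ultimately show ?thesis using 2 assms(2,3)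
      by (intro contains_M2_cyclic_shift[of "[a, b, c - 2, c - 1, c, c + 1]" n 2]) (simp_all, linarith?)
  next
    case 3
    have "{n - 1, a, b} \<in> ?H" using 3 by (simp add: insert_commute)
    then show ?thesis using 3 assms(1,2) wrap(1)
      by (intro contains_M2_cyclic_shift[of "[0, a, b, n - 3, n - 2, n - 1]" n 3]) (simp_all, linarith?)
  next
    case 4
    have "{a - 2, a - 1, a + 1} \<in> ?H" using 4 assms(2-4) by (intro step3) linarith+
    then show ?thesis using 4 assms(3,4)
      by (intro contains_M2_cyclic_shift[of "[a - 2, a - 1, a, a + 1, b, c]" n 0]) (simp_all, linarith?)
  next
    case 5
    have "{1, b, c} \<in> ?H" using 5 by simp
    then show ?thesis using 5 assms(1,3) wrap(2)
      by (intro contains_M2_cyclic_shift[of "[0, 1, 2, b, c, n - 1]" n 5]) (simp_all, linarith?)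
  next
    case 6
    have "{0, b, c} \<in> ?H" using 6 by simp
    then show ?thesis using 6 assms(1,3) wrap(3)
      by (intro contains_M2_cyclic_shift[of "[0, 1, b, c, n - 2, n - 1]" n 4]) (simp_all, linarith?)
  qed
qed

lemma saturated_sat_graph:
  assumes "7 \<le> n"
  shows "saturated n 6 M2 (sat_graph n)"
  unfolding saturated_def
proof (intro conjI ballI)
  show "cgh n (sat_graph n)"
    unfolding cgh_def sat_graph_def cyc_triples_def using cyc_triple_in_triples assms by auto
  show "\<not> contains_copy n (sat_graph n) 6 M2" using sat_graph_M2_free assms .
  fix e assume e: "e \<in> triples n - sat_graph n"
  then obtain a b c where abc: "a < b" "b < c" "e = {a, b, c}"
    unfolding triples_def by (auto elim: card_3_sorted)
  moreover have "c < n" using e abc unfolding triples_def by auto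
  ultimately show "contains_copy n (insert e (sat_graph n)) 6 M2"
    using sat_graph_add_edge[of n a b c] assms e by simp
qed

lemma card_sat_graph_le: "card (sat_graph n) \<le> 2 * n"
proof -
  have "card (sat_graph n) \<le> card (cyc_triples n 2) + card (cyc_triples n 3)"
    unfolding sat_graph_def by (rule card_Un_le)
  also have "\<dots> \<le> n + n"
    unfolding cyc_triples_def by (intro add_mono card_image_le[THEN order_trans]) auto
  finally show ?thesis by simp
qed

section \<open>Saturated graphs have at least \<open>5n/4\<close> edges\<close>

lemma card_le_mult_if_fibers_le:
  assumes "finite E" "\<And>x. x \<in> A \<Longrightarrow> w x \<in> E" "\<And>f. f \<in> E \<Longrightarrow> card {x \<in> A. w x = f} \<le> k"
  shows "card A \<le> k * card E"
proof -
  have "A = (\<Union>f\<in>E. {x \<in> A. w x = f})" using assms(2) by auto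
  then have "card A \<le> (\<Sum>f\<in>E. card {x \<in> A. w x = f})" using card_UN_le[OF assms(1)] by metis
  also have "\<dots> \<le> (\<Sum>f\<in>E. k)" using assms(3) by (rule sum_mono)
  finally show ?thesis by (simp add: mult.commute)
qed

lemma finite_triples: "finite (triples n)"
  by (rule finite_subset[of _ "Pow {0..<n}"]) (auto simp: triples_def)

lemma saturated_M2_insert_copy:
  assumes sat: "saturated n 6 M2 H" and e: "e \<in> triples n" "e \<notin> H"
  obtains r y0 y1 y2 y3 y4 y5 where "r < n"
    "y0 < y1" "y1 < y2" "y2 < y3" "y3 < y4" "y4 < y5" "y5 < n"
    "{rot n r y0, rot n r y1, rot n r y3} \<in> insert e H" "{rot n r y2, rot n r y4, rot n r y5} \<in> insert e H"
    "{rot n r y0, rot n r y1, rot n r y3} = e \<or> {rot n r y2, rot n r y4, rot n r y5} = e"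
proof -
  have "contains_copy n (insert e H) 6 M2" using sat e unfolding saturated_def by blast
  then obtain r y0 y1 y2 y3 y4 y5 where copy: "r < n"
    "y0 < y1" "y1 < y2" "y2 < y3" "y3 < y4" "y4 < y5" "y5 < n"
    "{rot n r y0, rot n r y1, rot n r y3} \<in> insert e H" "{rot n r y2, rot n r y4, rot n r y5} \<in> insert e H"
    unfolding contains_M2_iff by blast
  moreover have "\<not> contains_copy n H 6 M2" using sat unfolding saturated_def by blast
  then have "{rot n r y0, rot n r y1, rot n r y3} \<notin> H \<or> {rot n r y2, rot n r y4, rot n r y5} \<notin> H"
    unfolding contains_M2_iff using copy(1-7) by blast
  ultimately show ?thesis using that by blast
qed

lemma cyc_triples_2_subset_saturated:
  assumes sat: "saturated n 6 M2 H" and n: "7 \<le> n"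
  shows "cyc_triples n 2 \<subseteq> H"
proof
  fix e assume e2: "e \<in> cyc_triples n 2"
  show "e \<in> H"
  proof (rule ccontr)
    assume "e \<notin> H"
    moreover have "e \<in> triples n"
      using e2 cyc_triple_in_triples[of 2 n] n unfolding cyc_triples_def by auto
    ultimately obtain r y0 y1 y2 y3 y4 y5 where r: "r < n"
      and ys: "y0 < y1" "y1 < y2" "y2 < y3" "y3 < y4" "y4 < y5" "y5 < n"
      and "{rot n r y0, rot n r y1, rot n r y3} = e \<or> {rot n r y2, rot n r y4, rot n r y5} = e"
      using saturated_M2_insert_copy[OF sat] by metis
    then have "{y0, y1, y3} \<in> cyc_triples n 2 \<or> {y2, y4, y5} \<in> cyc_triples n 2"
      using cyc_triples_unrotate[OF r, of y0 y1 y3 2] cyc_triples_unrotate[OF r, of y2 y4 y5 2] e2 ys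
      by auto
    txt \<open>Both edges of \<open>M\<^sub>2\<close> skip a vertex of the copy, so neither can be consecutive.\<close>
    moreover have "{y0, y1, y3} \<notin> cyc_triples n 2" using cyc_triples_2_iff[of y0 y1 y3 n] ys by auto
    moreover have "{y2, y4, y5} \<notin> cyc_triples n 2" using cyc_triples_2_iff[of y2 y4 y5 n] ys by auto
    ultimately show False by blast
  qed
qed

lemma saturated_cyc_triple_3_witness:
  assumes sat: "saturated n 6 M2 H" and n: "7 \<le> n" and x: "x < n" and missing: "cyc_triple n 3 x \<notin> H"
  shows "\<exists>f \<in> H - cyc_triples n 2. (x + 2) mod n \<in> f"
proof -
  have e3: "cyc_triple n 3 x \<in> cyc_triples n 3" using x unfolding cyc_triples_def by simp
  have et: "cyc_triple n 3 x \<in> triples n" using cyc_triple_in_triples n x by simp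
  obtain r y0 y1 y2 y3 y4 y5 where r: "r < n"
    and ys: "y0 < y1" "y1 < y2" "y2 < y3" "y3 < y4" "y4 < y5" "y5 < n"
    and second: "{rot n r y2, rot n r y4, rot n r y5} \<in> insert (cyc_triple n 3 x) H"
    and new: "{rot n r y0, rot n r y1, rot n r y3} = cyc_triple n 3 x \<or>
      {rot n r y2, rot n r y4, rot n r y5} = cyc_triple n 3 x"
    using saturated_M2_insert_copy[OF sat et missing] by metis
  txt \<open>The triple \<open>{x, x+1, x+3}\<close> cannot be the edge \<open>{y\<^sub>2, y\<^sub>4, y\<^sub>5}\<close>, so it is
    \<open>{y\<^sub>0, y\<^sub>1, y\<^sub>3}\<close>; this places \<open>y\<^sub>2\<close> at \<open>x+2\<close>.\<close>
  have not_second: "{y2, y4, y5} \<notin> cyc_triples n 3"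
    using cyc_triples_3_iff[of y2 y4 y5 n] ys n by auto
  then have second_old: "{rot n r y2, rot n r y4, rot n r y5} \<noteq> cyc_triple n 3 x"
    using cyc_triples_unrotate[OF r, of y2 y4 y5 3] e3 ys by auto
  then have first: "{rot n r y0, rot n r y1, rot n r y3} = cyc_triple n 3 x"
    using new by simp
  then have "{y0, y1, y3} \<in> cyc_triples n 3" using cyc_triples_unrotate[OF r, of y0 y1 y3 3] e3 ys by simp
  then have y1: "y1 = y0 + 1" and y3: "y3 = y0 + 3"
    using cyc_triples_3_iff[of y0 y1 y3 n] ys n by auto
  have rot_shift: "rot n r (y0 + j) = (rot n r y0 + j) mod n" for j
    unfolding rot_def by (simp add: mod_simps ac_simps)
  have "cyc_triple n 3 (rot n r y0) = {rot n r y0, rot n r y1, rot n r y3}"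
    unfolding cyc_triple_def y1 y3 rot_shift ..
  then have "cyc_triple n 3 (rot n r y0) = cyc_triple n 3 x" using first by (rule trans)
  then have "rot n r y0 = x"
    using inj_on_cyc_triple[of 3 n] n x r unfolding inj_on_def by (auto simp: rot_def)
  moreover have "y2 = y0 + 2" using ys y1 y3 by linarith
  ultimately have "rot n r y2 = (x + 2) mod n" using rot_shift[of 2] by simp
  moreover have "{rot n r y2, rot n r y4, rot n r y5} \<in> H" using second second_old by blast
  moreover have "{rot n r y2, rot n r y4, rot n r y5} \<notin> cyc_triples n 2"
    using cyc_triples_unrotate[OF r, of y2 y4 y5 2] cyc_triples_2_iff[of y2 y4 y5 n] ys by auto
  ultimately show ?thesis by (intro bexI[of _ "{rot n r y2, rot n r y4, rot n r y5}"]) auto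
qed

lemma card_saturated_lower_bound:
  assumes sat: "saturated n 6 M2 H" and n: "7 \<le> n"
  shows "5 * n \<le> 4 * card H"
proof -
  have H: "H \<subseteq> triples n" using sat unfolding saturated_def cgh_def by blast
  then have "finite H" using finite_triples by (rule finite_subset)
  define E where "E = H - cyc_triples n 2"
  have "\<exists>f\<in>E. f = cyc_triple n 3 x \<or> (x + 2) mod n \<in> f" if "x \<in> {0..<n}" for x
    using saturated_cyc_triple_3_witness[OF sat n] cyc_triple_3_notin_cyc_triples_2[OF n] that
    unfolding E_def by (cases "cyc_triple n 3 x \<in> H") auto
  then obtain w where w: "\<And>x. x \<in> {0..<n} \<Longrightarrow> w x \<in> E \<and> (w x = cyc_triple n 3 x \<or> (x + 2) mod n \<in> w x)"
    by metis
  have fiber: "card {x \<in> {0..<n}. w x = f} \<le> 4" if "f \<in> E" for f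
  proof -
    let ?P = "(\<lambda>x. (x + 2) mod n) -` f \<inter> {0..<n}" and ?Q = "cyc_triple n 3 -` {f} \<inter> {0..<n}"
    have "f \<in> triples n" using that H unfolding E_def by auto
    then have f: "card f = 3" "finite f" unfolding triples_def by (auto intro: finite_subset)
    have "{x \<in> {0..<n}. w x = f} \<subseteq> ?P \<union> ?Q" using w by blast
    then have "card {x \<in> {0..<n}. w x = f} \<le> card (?P \<union> ?Q)" by (intro card_mono) auto
    also have "\<dots> \<le> card ?P + card ?Q" by (rule card_Un_le)
    also have "\<dots> \<le> card f + card {f}"
    proof (intro add_mono card_vimage_inj_on_le)
      show "inj_on (\<lambda>x. (x + 2) mod n) {0..<n}"
        using n by (auto simp: inj_on_def mod_if split: if_splits)
      show "inj_on (cyc_triple n 3) {0..<n}" using inj_on_cyc_triple n by simp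
    qed (use f in simp_all)
    finally show ?thesis using f(1) by simp
  qed
  have "finite E" unfolding E_def using \<open>finite H\<close> by simp
  then have "card {0..<n} \<le> 4 * card E"
    by (rule card_le_mult_if_fibers_le) (use w fiber in blast)+
  moreover have sub: "cyc_triples n 2 \<subseteq> H" using cyc_triples_2_subset_saturated[OF sat n] .
  then have "card E = card H - card (cyc_triples n 2)"
    unfolding E_def using \<open>finite H\<close> by (intro card_Diff_subset) (auto intro: finite_subset)
  moreover have "card (cyc_triples n 2) \<le> card H" using \<open>finite H\<close> sub by (rule card_mono)
  moreover have "card (cyc_triples n 2) = n"
    using inj_on_cyc_triple[of 2 n] n unfolding cyc_triples_def by (simp add: card_image)
  ultimately show ?thesis by simp
qed

lemma sat_cyc_M2_bounds:
  assumes n: "7 \<le> n"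
  shows "5 * n \<le> 4 * sat_cyc n 6 M2" and "sat_cyc n 6 M2 \<le> 2 * n"
proof -
  let ?S = "{H. saturated n 6 M2 H}"
  have "?S \<subseteq> Pow (triples n)" unfolding saturated_def cgh_def by auto
  then have fin: "finite (card ` ?S)" using finite_triples by (metis finite_Pow_iff finite_imageI finite_subset)
  have sat_graph: "sat_graph n \<in> ?S" using saturated_sat_graph[OF n] by simp
  then obtain H where "saturated n 6 M2 H" "sat_cyc n 6 M2 = card H"
    using Min_in[OF fin] unfolding sat_cyc_def by blast
  then show "5 * n \<le> 4 * sat_cyc n 6 M2" using card_saturated_lower_bound n by simp
  have "sat_cyc n 6 M2 \<le> card (sat_graph n)"
    unfolding sat_cyc_def using fin sat_graph by (intro Min_le) auto
  then show "sat_cyc n 6 M2 \<le> 2 * n" using card_sat_graph_le order_trans by blast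
qed

lemma smallo_if_eventually_zero: "eventually (\<lambda>x. f x = 0) F \<Longrightarrow> f \<in> o[F](g)"
  using landau_o.small.in_cong[of f "\<lambda>_. 0" F g] by simp

theorem propositionA5:
  shows "\<exists>f g. f \<in> o(\<lambda>n. real n) \<and> g \<in> o(\<lambda>n. real n) \<and>
     (\<forall>n. 11 * real n / 9 + f n \<le> real (sat_cyc n 6 M2) \<and>
          real (sat_cyc n 6 M2) \<le> 3 * real n + g n)"
proof (intro exI conjI allI)
  have large: "eventually (\<lambda>n::nat. 7 \<le> n) at_top" by (rule eventually_ge_at_top)
  show "(\<lambda>n. if n < 7 then -8 else 0 :: real) \<in> o(\<lambda>n. real n)"
    "(\<lambda>n. if n < 7 then real (sat_cyc n 6 M2) else 0) \<in> o(\<lambda>n. real n)"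
    by (intro smallo_if_eventually_zero eventually_mono[OF large]; simp)+
  fix n :: nat
  show "11 * real n / 9 + (if n < 7 then -8 else 0) \<le> real (sat_cyc n 6 M2)"
  proof (cases "n < 7")
    case True
    then have "real n \<le> 6" by simp
    then show ?thesis using True by simp
  next
    case False
    then have "real (5 * n) \<le> real (4 * sat_cyc n 6 M2)"
      using sat_cyc_M2_bounds(1)[of n] by (simp only: of_nat_le_iff not_less)
    then show ?thesis using False by simp
  qed
  show "real (sat_cyc n 6 M2) \<le> 3 * real n + (if n < 7 then real (sat_cyc n 6 M2) else 0)"
    using sat_cyc_M2_bounds(2)[of n] by (cases "n < 7") simp_all
qed

end
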